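(* Let $G=(V,E)$ be a finite simple graph, let $A$ be a nonzero commutative ring with unity, and let $R=A[V]$ be the polynomial ring over $A$ whose variables are the vertices of $G$. Then the open neighborhood ideal $\mathcal{N}(G)=(X_{N(v)} \mid v\in V)R$ satisfies $$\mathcal{N}(G)=\bigcap_{D}(D)R=\bigcap_{D\ \mathrm{minimal}}(D)R,$$ where the first intersection runs over all total dominating sets $D$ of $G$, and the second over all minimal total dominating sets of $G$. Moreover, the second decomposition is irredundant.
   Context: For $v\in V$, $N(v)=\{u\in V: uv\in E\}$ is the open neighborhood of $v$, and for $S\subseteq V$, $N(S)=\bigcup_{v\in S}N(v)$. For $U\subseteq V$, $X_U=\prod_{v\in U}v\in A[V]$. For $D\subseteq V$, $(D)R$ denotes the ideal generated by the variables in $D$. A set $D\subseteq V$ is a total dominating set (TD-set) of $G$ if $N(D)=V$; it is a minimal TD-set if no proper subset of $D$ is a TD-set. *)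

theory Defs
  imports Main "HOL-Library.Poly_Mapping"
begin

text \<open>A finite simple graph G = (V,E): the vertex set is the finite type 'v (V = UNIV),
  edges are given by a symmetric irreflexive relation E.\<close>

definition simple_graph :: "('v \<Rightarrow> 'v \<Rightarrow> bool) \<Rightarrow> bool" where
  "simple_graph E \<longleftrightarrow> (\<forall>u v. E u v \<longrightarrow> E v u) \<and> (\<forall>v. \<not> E v v)"

definition open_nbhd :: "('v \<Rightarrow> 'v \<Rightarrow> bool) \<Rightarrow> 'v \<Rightarrow> 'v set" where
  "open_nbhd E v = {u. E u v}"

definition open_nbhd_set :: "('v \<Rightarrow> 'v \<Rightarrow> bool) \<Rightarrow> 'v set \<Rightarrow> 'v set" where
  "open_nbhd_set E S = (\<Union>v\<in>S. open_nbhd E v)"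

definition total_dominating :: "('v \<Rightarrow> 'v \<Rightarrow> bool) \<Rightarrow> 'v set \<Rightarrow> bool" where
  "total_dominating E D \<longleftrightarrow> open_nbhd_set E D = UNIV"

definition minimal_total_dominating :: "('v \<Rightarrow> 'v \<Rightarrow> bool) \<Rightarrow> 'v set \<Rightarrow> bool" where
  "minimal_total_dominating E D \<longleftrightarrow>
     total_dominating E D \<and> (\<forall>D'. D' \<subset> D \<longrightarrow> \<not> total_dominating E D')"

type_synonym ('v, 'a) mpoly = "('v \<Rightarrow>\<^sub>0 nat) \<Rightarrow>\<^sub>0 'a"

definition pvar :: "'v \<Rightarrow> ('v, 'a::comm_ring_1) mpoly" where
  "pvar v = Poly_Mapping.single (Poly_Mapping.single v 1) 1"

definition monom_prod :: "'v set \<Rightarrow> ('v, 'a::comm_ring_1) mpoly" where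
  "monom_prod U = (\<Prod>v\<in>U. pvar v)"

definition ideal_gen :: "'r::comm_ring_1 set \<Rightarrow> 'r set" where
  "ideal_gen S = {(\<Sum>g\<in>F. r g * g) | F r. finite F \<and> F \<subseteq> S}"

definition open_nbhd_ideal :: "('v \<Rightarrow> 'v \<Rightarrow> bool) \<Rightarrow> ('v, 'a::comm_ring_1) mpoly set" where
  "open_nbhd_ideal E = ideal_gen {monom_prod (open_nbhd E v) | v. True}"

end

theory Submission
  imports Defs "HOL.Modules"
begin

text \<open>N(G) is the squarefree monomial ideal generated by the products X_U, U = N(v), and the
  argument works for any family of finite sets U. A polynomial lies in (D)R iff each of its
  monomials involves a variable of D; in particular X_U \<in> (D)R iff U meets D, so the monomial
  ideal lies in (D)R exactly when D meets every U, which for U = N(v) means that D is a TD-set.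
  Conversely, if f lies in all these ideals and m is a monomial of f, the set of variables
  absent from m cannot meet every U, so some U lies in the support of m and X_U divides m.
  Every TD-set contains a minimal one, and for a minimal TD-set D0 the monomial X_(V-D0) lies
  in (D)R for every other minimal TD-set D (as D is not contained in D0), but not in
  (D0)R \<supseteq> N(G).\<close>

interpretation ring_module: module "(*) :: 'a::comm_ring_1 \<Rightarrow> 'a \<Rightarrow> 'a"
  by standard (simp_all add: algebra_simps)

lemma ideal_gen_eq_span: "ideal_gen S = ring_module.span S"
  unfolding ideal_gen_def ring_module.span_explicit ..

definition sqfree_monomial :: "'v set \<Rightarrow> 'v \<Rightarrow>\<^sub>0 nat" where
  "sqfree_monomial U = (\<Sum>u\<in>U. Poly_Mapping.single u 1)"

lemma lookup_sqfree_monomial: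
  "finite U \<Longrightarrow> Poly_Mapping.lookup (sqfree_monomial U) w = (if w \<in> U then 1 else 0)"
  unfolding sqfree_monomial_def by (simp add: lookup_sum lookup_single when_def)

lemma monom_prod_eq_single:
  "finite U \<Longrightarrow>
    (monom_prod U :: ('v, 'a::comm_ring_1) mpoly) = Poly_Mapping.single (sqfree_monomial U) 1"
  by (induction U rule: finite_induct)
    (simp_all add: monom_prod_def sqfree_monomial_def pvar_def mult_single)

lemma poly_mapping_eq_sum_single:
  "f = (\<Sum>m\<in>Poly_Mapping.keys f. Poly_Mapping.single m (Poly_Mapping.lookup f m))"
  by (rule poly_mapping_eqI) (auto simp: lookup_sum lookup_single when_def in_keys_iff)

lemma keys_of_var_ideal:
  assumes "(f :: ('v, 'a::comm_ring_1) mpoly) \<in> ideal_gen (pvar ` D)"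
    and "m \<in> Poly_Mapping.keys f"
  shows "\<exists>d\<in>D. 0 < Poly_Mapping.lookup m d"
proof -
  let ?I = "{f :: ('v, 'a) mpoly.
    \<forall>m\<in>Poly_Mapping.keys f. \<exists>d\<in>D. 0 < Poly_Mapping.lookup m d}"
  have "ring_module.subspace ?I"
    unfolding ring_module.subspace_def
  proof (intro conjI ballI allI)
    show "0 \<in> ?I"
      by simp
  next
    fix f g :: "('v, 'a) mpoly"
    assume "f \<in> ?I" "g \<in> ?I"
    then show "f + g \<in> ?I"
      using keys_add[of f g] by blast
  next
    fix c f :: "('v, 'a) mpoly"
    assume f: "f \<in> ?I"
    show "c * f \<in> ?I"
    proof (intro CollectI ballI)
      fix m
      assume "m \<in> Poly_Mapping.keys (c * f)"
      then obtain a b where "m = a + b" "b \<in> Poly_Mapping.keys f"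
        using keys_mult[of c f] by blast
      with f obtain d where "d \<in> D" "0 < Poly_Mapping.lookup b d"
        by blast
      with \<open>m = a + b\<close> show "\<exists>d\<in>D. 0 < Poly_Mapping.lookup m d"
        by (auto simp: lookup_add)
    qed
  qed
  moreover have "pvar ` D \<subseteq> ?I"
    by (auto simp: pvar_def lookup_single when_def)
  ultimately have "ideal_gen (pvar ` D) \<subseteq> ?I"
    unfolding ideal_gen_eq_span by (rule ring_module.span_minimal[rotated])
  with assms show ?thesis
    by blast
qed

lemma monom_prod_in_var_ideal_iff:
  assumes "finite U"
  shows "(monom_prod U :: ('v, 'a::comm_ring_1) mpoly) \<in> ideal_gen (pvar ` D)
      \<longleftrightarrow> U \<inter> D \<noteq> {}"
proof
  assume "(monom_prod U :: ('v, 'a) mpoly) \<in> ideal_gen (pvar ` D)"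
  moreover have "sqfree_monomial U \<in> Poly_Mapping.keys (monom_prod U :: ('v, 'a) mpoly)"
    by (simp add: monom_prod_eq_single assms)
  ultimately obtain d where "d \<in> D" "0 < Poly_Mapping.lookup (sqfree_monomial U) d"
    using keys_of_var_ideal by blast
  then show "U \<inter> D \<noteq> {}"
    by (auto simp: lookup_sqfree_monomial assms split: if_splits)
next
  assume "U \<inter> D \<noteq> {}"
  then obtain d where d: "d \<in> U" "d \<in> D"
    by blast
  then have "(monom_prod U :: ('v, 'a) mpoly) = monom_prod (U - {d}) * pvar d"
    unfolding monom_prod_def by (simp add: prod.remove assms mult.commute)
  also have "\<dots> \<in> ideal_gen (pvar ` D)"
    unfolding ideal_gen_eq_span using d by (intro ring_module.span_scale ring_module.span_base) simp
  finally show "(monom_prod U :: ('v, 'a) mpoly) \<in> ideal_gen (pvar ` D)" .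
qed

lemma in_monomial_ideal_if_divisible:
  assumes fin: "\<And>i. finite (U i)"
    and dvd: "\<And>m. m \<in> Poly_Mapping.keys f \<Longrightarrow> \<exists>i. \<forall>u\<in>U i. 0 < Poly_Mapping.lookup m u"
  shows "(f :: ('v, 'a::comm_ring_1) mpoly) \<in> ideal_gen (range (\<lambda>i. monom_prod (U i)))"
proof -
  have "Poly_Mapping.single m (Poly_Mapping.lookup f m)
      \<in> ideal_gen (range (\<lambda>i. monom_prod (U i)))" if m: "m \<in> Poly_Mapping.keys f" for m
  proof -
    obtain i where i: "\<forall>u\<in>U i. 0 < Poly_Mapping.lookup m u"
      using dvd m by blast
    have "m - sqfree_monomial (U i) + sqfree_monomial (U i) = m"
      by (rule poly_mapping_eqI)
        (use i in \<open>auto simp: lookup_add lookup_minus lookup_sqfree_monomial fin\<close>)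
    then have "Poly_Mapping.single m (Poly_Mapping.lookup f m) =
        Poly_Mapping.single (m - sqfree_monomial (U i)) (Poly_Mapping.lookup f m)
          * (monom_prod (U i) :: ('v, 'a) mpoly)"
      by (simp add: monom_prod_eq_single fin mult_single)
    then show ?thesis
      unfolding ideal_gen_eq_span by (simp add: ring_module.span_scale ring_module.span_base)
  qed
  then show ?thesis
    by (subst poly_mapping_eq_sum_single) (simp add: ideal_gen_eq_span ring_module.span_sum)
qed

lemma monomial_ideal_subset_var_ideal:
  assumes fin: "\<And>i. finite (U i)" and transversal: "\<forall>i. U i \<inter> D \<noteq> {}"
  shows "(ideal_gen (range (\<lambda>i. monom_prod (U i))) :: ('v, 'a::comm_ring_1) mpoly set)
       \<subseteq> ideal_gen (pvar ` D)"
proof -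
  have "range (\<lambda>i. monom_prod (U i)) \<subseteq> (ideal_gen (pvar ` D) :: ('v, 'a) mpoly set)"
    using transversal by (auto simp: monom_prod_in_var_ideal_iff fin)
  then show ?thesis
    unfolding ideal_gen_eq_span by (rule ring_module.span_minimal) (rule ring_module.subspace_span)
qed

lemma Inter_transversal_var_ideals_subset_monomial_ideal:
  assumes fin: "\<And>i. finite (U i)"
    and f: "f \<in> \<Inter> {ideal_gen (pvar ` D) | D. \<forall>i. U i \<inter> D \<noteq> {}}"
  shows "(f :: ('v, 'a::comm_ring_1) mpoly) \<in> ideal_gen (range (\<lambda>i. monom_prod (U i)))"
proof (rule in_monomial_ideal_if_divisible[OF fin])
  fix m
  assume m: "m \<in> Poly_Mapping.keys f"
  show "\<exists>i. \<forall>u\<in>U i. 0 < Poly_Mapping.lookup m u"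
  proof (rule ccontr)
    assume "\<nexists>i. \<forall>u\<in>U i. 0 < Poly_Mapping.lookup m u"
    then have "\<forall>i. U i \<inter> {u. Poly_Mapping.lookup m u = 0} \<noteq> {}"
      by auto
    then have "f \<in> ideal_gen (pvar ` {u. Poly_Mapping.lookup m u = 0})"
      using f by blast
    with m show False
      using keys_of_var_ideal by fastforce
  qed
qed

theorem monomial_ideal_eq_Inter_transversal_var_ideals:
  assumes "\<And>i. finite (U i)"
  shows "(ideal_gen (range (\<lambda>i. monom_prod (U i))) :: ('v, 'a::comm_ring_1) mpoly set)
       = \<Inter> {ideal_gen (pvar ` D) | D. \<forall>i. U i \<inter> D \<noteq> {}}"
proof (rule equalityI)
  show "ideal_gen (range (\<lambda>i. monom_prod (U i)))
      \<subseteq> (\<Inter> {ideal_gen (pvar ` D) | D. \<forall>i. U i \<inter> D \<noteq> {}} :: ('v, 'a) mpoly set)"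
    by (rule Inter_greatest) (auto dest: monomial_ideal_subset_var_ideal[OF assms])
  show "\<Inter> {ideal_gen (pvar ` D) | D. \<forall>i. U i \<inter> D \<noteq> {}}
      \<subseteq> (ideal_gen (range (\<lambda>i. monom_prod (U i))) :: ('v, 'a) mpoly set)"
    by (rule subsetI) (rule Inter_transversal_var_ideals_subset_monomial_ideal[OF assms])
qed

lemma total_dominating_iff_meets_open_nbhds:
  assumes "simple_graph E"
  shows "total_dominating E D \<longleftrightarrow> (\<forall>v. open_nbhd E v \<inter> D \<noteq> {})"
  using assms unfolding simple_graph_def total_dominating_def open_nbhd_set_def open_nbhd_def
  by blast

lemma open_nbhd_ideal_eq_Inter_total_dominating:
  fixes E :: "'v::finite \<Rightarrow> 'v \<Rightarrow> bool"
  assumes "simple_graph E"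
  shows "(open_nbhd_ideal E :: ('v, 'a::comm_ring_1) mpoly set)
       = \<Inter> {ideal_gen (pvar ` D) | D. total_dominating E D}"
proof -
  have "(open_nbhd_ideal E :: ('v, 'a) mpoly set)
      = ideal_gen (range (\<lambda>v. monom_prod (open_nbhd E v)))"
    unfolding open_nbhd_ideal_def by (simp add: full_SetCompr_eq)
  also have "\<dots> = \<Inter> {ideal_gen (pvar ` D) | D. \<forall>v. open_nbhd E v \<inter> D \<noteq> {}}"
    by (rule monomial_ideal_eq_Inter_transversal_var_ideals) simp
  also have "\<dots> = \<Inter> {ideal_gen (pvar ` D) | D. total_dominating E D}"
    by (simp add: total_dominating_iff_meets_open_nbhds assms)
  finally show ?thesis .
qed

lemma total_dominating_contains_minimal:
  fixes E :: "'v::finite \<Rightarrow> 'v \<Rightarrow> bool"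
  assumes "total_dominating E D"
  obtains D' where "D' \<subseteq> D" "minimal_total_dominating E D'"
proof -
  have "finite {D'. D' \<subseteq> D \<and> total_dominating E D'}"
    by simp
  from finite_has_minimal2[OF this, of D] assms obtain D' where
    "D' \<subseteq> D" "total_dominating E D'"
    and "\<forall>D''\<in>{D'. D' \<subseteq> D \<and> total_dominating E D'}. D'' \<subseteq> D' \<longrightarrow> D' = D''"
    by blast
  then have "minimal_total_dominating E D'"
    unfolding minimal_total_dominating_def by blast
  with \<open>D' \<subseteq> D\<close> show thesis
    by (rule that)
qed

lemma Inter_minimal_total_dominating_ideals:
  fixes E :: "'v::finite \<Rightarrow> 'v \<Rightarrow> bool"
  shows "(\<Inter> {ideal_gen (pvar ` D) | D. minimal_total_dominating E D}
          :: ('v, 'a::comm_ring_1) mpoly set)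
       = \<Inter> {ideal_gen (pvar ` D) | D. total_dominating E D}"
proof (rule antisym)
  show "\<Inter> {ideal_gen (pvar ` D) | D. minimal_total_dominating E D}
      \<subseteq> (\<Inter> {ideal_gen (pvar ` D) | D. total_dominating E D} :: ('v, 'a) mpoly set)"
  proof (rule Inter_greatest)
    fix I :: "('v, 'a) mpoly set"
    assume "I \<in> {ideal_gen (pvar ` D) | D. total_dominating E D}"
    then obtain D where I: "I = ideal_gen (pvar ` D)" and D: "total_dominating E D"
      by blast
    from D obtain D' where "D' \<subseteq> D" "minimal_total_dominating E D'"
      by (rule total_dominating_contains_minimal)
    then have "\<Inter> {ideal_gen (pvar ` D) | D. minimal_total_dominating E D}
        \<subseteq> ideal_gen (pvar ` D')"
      by blast
    also have "\<dots> \<subseteq> I"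
      unfolding I ideal_gen_eq_span by (intro ring_module.span_mono image_mono \<open>D' \<subseteq> D\<close>)
    finally show "\<Inter> {ideal_gen (pvar ` D) | D. minimal_total_dominating E D} \<subseteq> I" .
  qed
  show "\<Inter> {ideal_gen (pvar ` D) | D. total_dominating E D}
      \<subseteq> (\<Inter> {ideal_gen (pvar ` D) | D. minimal_total_dominating E D} :: ('v, 'a) mpoly set)"
    unfolding minimal_total_dominating_def by blast
qed

lemma monom_prod_compl_in_other_minimal:
  fixes E :: "'v::finite \<Rightarrow> 'v \<Rightarrow> bool"
  assumes "minimal_total_dominating E D0" "minimal_total_dominating E D" "D \<noteq> D0"
  shows "(monom_prod (- D0) :: ('v, 'a::comm_ring_1) mpoly) \<in> ideal_gen (pvar ` D)"
proof -
  have "\<not> D \<subseteq> D0"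
    using assms unfolding minimal_total_dominating_def by blast
  then show ?thesis
    by (auto simp: monom_prod_in_var_ideal_iff)
qed

theorem theorem2p10:
  fixes E :: "'v::finite \<Rightarrow> 'v \<Rightarrow> bool"
  assumes "simple_graph E"
  shows "(open_nbhd_ideal E :: ('v, 'a::comm_ring_1) mpoly set)
           = \<Inter> {ideal_gen (pvar ` D) | D. total_dominating E D}
       \<and> (open_nbhd_ideal E :: ('v, 'a) mpoly set)
           = \<Inter> {ideal_gen (pvar ` D) | D. minimal_total_dominating E D}
       \<and> (\<forall>D0. minimal_total_dominating E D0 \<longrightarrow>
           \<Inter> {ideal_gen (pvar ` D) | D. minimal_total_dominating E D \<and> D \<noteq> D0}
             \<noteq> (open_nbhd_ideal E :: ('v, 'a) mpoly set))"
proof (intro conjI allI impI)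
  show td: "(open_nbhd_ideal E :: ('v, 'a) mpoly set)
      = \<Inter> {ideal_gen (pvar ` D) | D. total_dominating E D}"
    using assms by (rule open_nbhd_ideal_eq_Inter_total_dominating)
  then show "(open_nbhd_ideal E :: ('v, 'a) mpoly set)
      = \<Inter> {ideal_gen (pvar ` D) | D. minimal_total_dominating E D}"
    by (simp add: Inter_minimal_total_dominating_ideals)
  fix D0
  assume D0: "minimal_total_dominating E D0"
  have "(monom_prod (- D0) :: ('v, 'a) mpoly)
      \<in> \<Inter> {ideal_gen (pvar ` D) | D. minimal_total_dominating E D \<and> D \<noteq> D0}"
    by (auto intro: monom_prod_compl_in_other_minimal[OF D0])
  moreover have "(open_nbhd_ideal E :: ('v, 'a) mpoly set) \<subseteq> ideal_gen (pvar ` D0)"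
    unfolding td by (rule Inter_lower) (use D0 in \<open>auto simp: minimal_total_dominating_def\<close>)
  then have "(monom_prod (- D0) :: ('v, 'a) mpoly) \<notin> open_nbhd_ideal E"
    by (auto simp: monom_prod_in_var_ideal_iff)
  ultimately show "\<Inter> {ideal_gen (pvar ` D) | D. minimal_total_dominating E D \<and> D \<noteq> D0}
      \<noteq> (open_nbhd_ideal E :: ('v, 'a) mpoly set)"
    by metis
qed

end
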